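(* Let $f\colon\mathbb R\to\mathbb R$ be continuous and suppose there are $a>0$ and $b\in\mathbb R$ with $|f(x)|\leqslant a\cosh(bx)$ for all $x$. Fix $\lambda>0$, let $P_n = e^{-\lambda}\lambda^n/n!$, and for $k\geqslant1$ let $h_k\colon y\mapsto f(y)/k$. For a compactly supported Borel probability measure $\rho$ on $\mathbb R$ and $x\in\mathbb R$ define the probability measures $$\sigma^{f,\rho}_x = \sum_{n=0}^\infty P_n\,(h_{n+1})_\star\big(\delta_x*\rho^{*n}\big),\qquad \sigma^{f,\rho} = \sum_{n=0}^\infty P_n\,(h_{n+1})_\star\big(\rho^{*(n+1)}\big),$$ where $(h_k)_\star$ is pushforward, $*$ is convolution and $\rho^{*0}=\delta_0$. Then for every compactly supported probability measure $\rho$ and every $x\in\mathbb R$, the expectations $\langle\sigma^{f,\rho}_x, y\rangle$ and $\langle\sigma^{f,\rho},y\rangle$ are finite; equivalently, $$\sum_{n=0}^\infty \frac{e^{-\lambda}\lambda^n}{(n+1)!}\big|\langle\delta_x*\rho^{*n}, f\rangle\big|<\infty \quad\text{and}\quad \sum_{n=0}^\infty \frac{e^{-\lambda}\lambda^n}{(n+1)!}\big|\langle\rho^{*(n+1)}, f\rangle\big|<\infty.$$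
   Context: $\langle\tau,\phi\rangle=\int\phi\,d\tau$; $\delta_a$ is the Dirac measure at $a$; $\cosh$ is the hyperbolic cosine. Here $\langle\sigma,y\rangle$ denotes the mean $\int y\,d\sigma(y)$. *)

theory Defs
  imports "HOL-Probability.Probability" "HOL-Probability.Convolution"
begin

fun conv_pow :: "real measure \<Rightarrow> nat \<Rightarrow> real measure" where
  "conv_pow \<rho> 0 = return borel 0"
| "conv_pow \<rho> (Suc n) = convolution \<rho> (conv_pow \<rho> n)"

definition poisson_weight :: "real \<Rightarrow> nat \<Rightarrow> real" where
  "poisson_weight l n = exp (- l) * l ^ n / fact n"

definition mixture :: "(nat \<Rightarrow> real) \<Rightarrow> (nat \<Rightarrow> real measure) \<Rightarrow> real measure" where
  "mixture P \<mu> = measure_of UNIV (sets borel)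
      (\<lambda>A. \<Sum>n. ennreal (P n) * emeasure (\<mu> n) A)"

definition hk :: "(real \<Rightarrow> real) \<Rightarrow> nat \<Rightarrow> real \<Rightarrow> real" where
  "hk f k y = f y / real k"

definition sigma_x :: "(real \<Rightarrow> real) \<Rightarrow> real \<Rightarrow> real measure \<Rightarrow> real \<Rightarrow> real measure" where
  "sigma_x f l \<rho> x = mixture (poisson_weight l)
      (\<lambda>n. distr (convolution (return borel x) (conv_pow \<rho> n)) borel (hk f (n + 1)))"

definition sigma :: "(real \<Rightarrow> real) \<Rightarrow> real \<Rightarrow> real measure \<Rightarrow> real measure" where
  "sigma f l \<rho> = mixture (poisson_weight l)
      (\<lambda>n. distr (conv_pow \<rho> (Suc n)) borel (hk f (n + 1)))"

definition compactly_supported_prob :: "real measure \<Rightarrow> bool" where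
  "compactly_supported_prob \<rho> \<longleftrightarrow> prob_space \<rho> \<and> sets \<rho> = sets borel \<and>
      (\<exists>K. compact K \<and> emeasure \<rho> K = 1)"

end

theory Submission
  imports Defs
begin

text \<open>If \<rho> is concentrated on [-R, R], then \<delta>_x * \<rho>^{*n} is concentrated on
  [-(|x| + nR), |x| + nR], where |f| <= a cosh(by) <= a exp(|b|(|x| + nR)); dividing by n + 1
  only shrinks this bound. So the n-th component of each mixture, and the n-th term of each series,
  is at most a constant times \<lambda>^n exp(n|b|R) / n!, which is summable.\<close>

lemma cosh_le_exp_abs: "cosh (t::real) \<le> exp \<bar>t\<bar>"
proof -
  have "exp t + exp (- t) \<le> exp \<bar>t\<bar> + exp \<bar>t\<bar>" by (intro add_mono) auto
  then show ?thesis unfolding cosh_def by simp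
qed

lemma cosh_le_exp_of_abs_le:
  fixes b x :: real
  assumes "\<bar>x\<bar> \<le> C"
  shows "cosh (b * x) \<le> exp (\<bar>b\<bar> * C)"
proof -
  have "cosh (b * x) \<le> exp \<bar>b * x\<bar>" by (rule cosh_le_exp_abs)
  also have "\<dots> \<le> exp (\<bar>b\<bar> * C)" using assms by (simp add: abs_mult mult_left_mono)
  finally show ?thesis .
qed

lemma prob_space_convolution:
  assumes "prob_space M" "sets M = sets borel" "prob_space N" "sets N = sets borel"
  shows "prob_space (M \<star> N :: real measure)"
proof -
  have "(\<lambda>(x, y). x + y) \<in> borel_measurable (M \<Otimes>\<^sub>M N)"
    using assms by (simp add: measurable_cong_sets[OF sets_pair_measure_cong[of M borel N borel]])
  then show ?thesis
    unfolding convolution_def using assms by (intro prob_space.prob_space_distr prob_space_pair)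
qed

lemma AE_convolution_abs_le:
  assumes "sigma_finite_measure M" "sets M = sets borel" "sigma_finite_measure N" "sets N = sets borel"
    and "AE x in M. \<bar>x\<bar> \<le> A" and "AE y in N. \<bar>y\<bar> \<le> B"
  shows "AE z in M \<star> N. \<bar>z :: real\<bar> \<le> A + B"
proof -
  interpret pair_sigma_finite M N using assms(1,3) by (rule pair_sigma_finite.intro)
  have [measurable_cong]: "sets M = sets borel" "sets N = sets borel" by fact+
  have "AE p in M \<Otimes>\<^sub>M N. \<bar>fst p + snd p\<bar> \<le> A + B"
  proof (rule AE_pair_measure)
    show "AE x in M. AE y in N. \<bar>fst (x, y) + snd (x, y)\<bar> \<le> A + B"
      using assms(5) by eventually_elim (use assms(6) in \<open>auto elim!: eventually_mono\<close>)
  qed measurable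
  then show ?thesis
    unfolding convolution_def by (subst AE_distr_iff) (auto simp: case_prod_beta)
qed

lemma sets_conv_pow [simp]: "sets (conv_pow \<rho> n) = sets borel"
  by (cases n) simp_all

lemma prob_space_conv_pow:
  assumes "prob_space \<rho>" "sets \<rho> = sets borel"
  shows "prob_space (conv_pow \<rho> n)"
  by (induction n) (simp_all add: prob_space_return prob_space_convolution assms)

lemma AE_conv_pow_abs_le:
  assumes "prob_space \<rho>" "sets \<rho> = sets borel" "AE z in \<rho>. \<bar>z\<bar> \<le> R"
  shows "AE z in conv_pow \<rho> n. \<bar>z\<bar> \<le> real n * R"
proof (induction n)
  case 0
  show ?case unfolding conv_pow.simps(1) by (simp add: AE_return)
next
  case (Suc n)
  have "AE z in \<rho> \<star> conv_pow \<rho> n. \<bar>z\<bar> \<le> R + real n * R"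
    using assms Suc prob_space_conv_pow[OF assms(1,2), of n]
    by (intro AE_convolution_abs_le) (auto intro: prob_space_imp_sigma_finite)
  then show ?case unfolding conv_pow.simps(2) by (simp add: algebra_simps)
qed

lemma compactly_supported_prob_AE_abs_le:
  assumes "compactly_supported_prob \<rho>"
  obtains R where "AE z in \<rho>. \<bar>z\<bar> \<le> R"
proof -
  from assms obtain K where "prob_space \<rho>" and sets: "sets \<rho> = sets borel"
    and "compact K" and K: "emeasure \<rho> K = 1"
    unfolding compactly_supported_prob_def by blast
  interpret prob_space \<rho> by fact
  obtain R where R: "\<forall>x\<in>K. norm x \<le> R"
    using compact_imp_bounded[OF \<open>compact K\<close>] by (auto simp: bounded_iff)
  have "K \<in> events" using sets \<open>compact K\<close> by (simp add: compact_imp_closed)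
  then have "AE z in \<rho>. z \<in> K" using K by (intro AE_prob_1) (simp add: emeasure_eq_measure)
  then have "AE z in \<rho>. \<bar>z\<bar> \<le> R" by eventually_elim (use R in auto)
  then show ?thesis by (rule that)
qed

lemma mixture_eq_bind:
  assumes P: "\<And>n. prob_space (\<mu> n)" and S: "\<And>n. sets (\<mu> n) = sets borel"
  shows "mixture P \<mu> = density (count_space UNIV) (\<lambda>n. ennreal (P n)) \<bind> \<mu>"
    (is "_ = ?B")
proof -
  have meas: "\<mu> \<in> measurable (density (count_space UNIV) (\<lambda>n. ennreal (P n))) (subprob_algebra borel)"
    using P S by (auto simp: space_subprob_algebra prob_space_imp_subprob_space)
  have sB: "sets ?B = sets borel" using S by (subst sets_bind) auto
  then have spB: "space ?B = UNIV" using sets_eq_imp_space_eq by fastforce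
  have "emeasure ?B A = (\<Sum>n. ennreal (P n) * emeasure (\<mu> n) A)" if "A \<in> sets borel" for A
  proof -
    have "emeasure ?B A = (\<integral>\<^sup>+n. emeasure (\<mu> n) A \<partial>density (count_space UNIV) (\<lambda>n. ennreal (P n)))"
      using that by (intro emeasure_bind[OF _ meas]) simp
    also have "\<dots> = (\<integral>\<^sup>+n. ennreal (P n) * emeasure (\<mu> n) A \<partial>count_space UNIV)"
      by (subst nn_integral_density) auto
    also have "\<dots> = (\<Sum>n. ennreal (P n) * emeasure (\<mu> n) A)"
      by (rule nn_integral_count_space_nat)
    finally show ?thesis .
  qed
  then have "mixture P \<mu> = measure_of UNIV (sets borel) (emeasure ?B)"
    unfolding mixture_def by (intro measure_of_eq) (auto simp: sets.sigma_sets_eq[of borel, simplified])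
  also have "\<dots> = ?B" using measure_of_of_measure[of ?B] sB spB by simp
  finally show ?thesis .
qed

lemma integrable_mixture_id:
  assumes P: "\<And>n. prob_space (\<mu> n)" and S: "\<And>n. sets (\<mu> n) = sets borel"
    and nonneg: "\<And>n. P n \<ge> 0" "\<And>n. B n \<ge> 0"
    and bound: "\<And>n. AE y in \<mu> n. \<bar>y :: real\<bar> \<le> B n"
    and summable: "summable (\<lambda>n. P n * B n)"
  shows "integrable (mixture P \<mu>) (\<lambda>y. y)"
proof -
  let ?D = "density (count_space UNIV) (\<lambda>n. ennreal (P n))"
  have meas: "\<mu> \<in> measurable ?D (subprob_algebra borel)"
    using P S by (auto simp: space_subprob_algebra prob_space_imp_subprob_space)
  have sets_bind: "sets (?D \<bind> \<mu>) = sets borel" using S by (subst sets_bind) auto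
  have "(\<integral>\<^sup>+y. ennreal (norm y) \<partial>(?D \<bind> \<mu>)) = (\<integral>\<^sup>+n. \<integral>\<^sup>+y. ennreal (norm y) \<partial>\<mu> n \<partial>?D)"
    by (rule nn_integral_bind[OF _ meas]) measurable
  also have "\<dots> = (\<Sum>n. ennreal (P n) * \<integral>\<^sup>+y. ennreal (norm y) \<partial>\<mu> n)"
    by (simp add: nn_integral_density nn_integral_count_space_nat)
  also have "\<dots> \<le> (\<Sum>n. ennreal (P n * B n))"
  proof (intro suminf_le summableI)
    fix n
    interpret prob_space "\<mu> n" by (rule P)
    have "(\<integral>\<^sup>+y. ennreal (norm y) \<partial>\<mu> n) \<le> ennreal (B n)"
      using bound[of n] by (intro nn_integral_le_const) (auto elim!: eventually_mono)
    then show "ennreal (P n) * (\<integral>\<^sup>+y. ennreal (norm y) \<partial>\<mu> n) \<le> ennreal (P n * B n)"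
      using nonneg by (simp add: ennreal_mult mult_left_mono)
  qed
  also have "\<dots> = ennreal (\<Sum>n. P n * B n)"
    using nonneg summable by (intro suminf_ennreal2) auto
  also have "\<dots> < \<infinity>" by simp
  finally have "(\<integral>\<^sup>+y. ennreal (norm y) \<partial>(?D \<bind> \<mu>)) < \<infinity>" .
  then have "integrable (?D \<bind> \<mu>) (\<lambda>y. y)"
    using sets_bind by (subst integrable_iff_bounded) (simp add: measurable_cong_sets[OF sets_bind])
  then show ?thesis using mixture_eq_bind[OF P S] by simp
qed

lemma summable_poisson_weight_exp: "summable (\<lambda>n. poisson_weight l n * exp (real n * c))"
proof -
  have "poisson_weight l n * exp (real n * c) = exp (- l) * (inverse (fact n) * (l * exp c) ^ n)" for n
    unfolding poisson_weight_def exp_of_nat_mult by (simp add: power_mult_distrib field_simps)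
  then show ?thesis by (simp add: summable_mult summable_exp)
qed

lemma shifted_poisson_weight_le:
  assumes "l \<ge> 0"
  shows "exp (- l) * l ^ n / fact (n + 1) \<le> poisson_weight l n"
  unfolding poisson_weight_def using assms
  by (intro divide_left_mono fact_mono) auto

lemma AE_distr_hk_abs_le:
  fixes f :: "real \<Rightarrow> real"
  assumes "f \<in> borel_measurable borel" "sets \<nu> = sets borel"
    and "AE z in \<nu>. \<bar>f z\<bar> \<le> B" and "k \<ge> 1"
  shows "AE y in distr \<nu> borel (hk f k). \<bar>y\<bar> \<le> B"
proof -
  have "hk f k \<in> borel_measurable \<nu>"
    using assms(1) unfolding hk_def measurable_cong_sets[OF assms(2) refl] by measurable
  moreover have "AE z in \<nu>. \<bar>hk f k z\<bar> \<le> B"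
    using assms(3)
  proof eventually_elim
    case (elim z)
    have "\<bar>f z\<bar> / real k \<le> \<bar>f z\<bar>" using \<open>k \<ge> 1\<close> by (simp add: divide_le_eq mult_le_cancel_left1)
    with elim show ?case by (simp add: hk_def)
  qed
  ultimately show ?thesis by (subst AE_distr_iff) auto
qed

lemma poisson_mixture_finite_mean:
  fixes f :: "real \<Rightarrow> real" and \<nu> :: "nat \<Rightarrow> real measure"
  assumes f_meas: "f \<in> borel_measurable borel"
    and f_bound: "\<And>x. \<bar>f x\<bar> \<le> a * cosh (b * x)"
    and "l \<ge> 0"
    and prob: "\<And>n. prob_space (\<nu> n)" and sets: "\<And>n. sets (\<nu> n) = sets borel"
    and support: "\<And>n. AE z in \<nu> n. \<bar>z\<bar> \<le> d + real n * R"
  shows "integrable (mixture (poisson_weight l) (\<lambda>n. distr (\<nu> n) borel (hk f (n + 1)))) (\<lambda>y. y)"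
    and "integrable (\<nu> n) f"
    and "summable (\<lambda>n. exp (- l) * l ^ n / fact (n + 1) * \<bar>integral\<^sup>L (\<nu> n) f\<bar>)"
proof -
  define B where "B n = a * exp (\<bar>b\<bar> * (d + real n * R))" for n
  have "a \<ge> 0" using f_bound[of 0] abs_ge_zero[of "f 0"] by simp
  then have B_nonneg: "B n \<ge> 0" for n unfolding B_def by simp
  have f_AE: "AE z in \<nu> n. \<bar>f z\<bar> \<le> B n" for n
    using support[of n]
  proof eventually_elim
    case (elim z)
    have "\<bar>f z\<bar> \<le> a * cosh (b * z)" by (rule f_bound)
    also have "\<dots> \<le> B n"
      unfolding B_def using \<open>a \<ge> 0\<close> elim by (intro mult_left_mono cosh_le_exp_of_abs_le)
    finally show ?case .
  qed
  have f_integrable: "integrable (\<nu> n) f" and f_integral: "\<bar>integral\<^sup>L (\<nu> n) f\<bar> \<le> B n" for n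
  proof -
    interpret prob_space "\<nu> n" by (rule prob)
    show "integrable (\<nu> n) f"
      using f_AE f_meas by (intro integrable_const_bound) (auto simp: measurable_cong_sets[OF sets])
    have "\<bar>integral\<^sup>L (\<nu> n) f\<bar> \<le> integral\<^sup>L (\<nu> n) (\<lambda>z. \<bar>f z\<bar>)" by (rule integral_abs_bound)
    also have "\<dots> \<le> B n" using \<open>integrable (\<nu> n) f\<close> f_AE by (intro integral_le_const) auto
    finally show "\<bar>integral\<^sup>L (\<nu> n) f\<bar> \<le> B n" .
  qed
  have "B n = a * exp (\<bar>b\<bar> * d) * exp (real n * (\<bar>b\<bar> * R))" for n
    unfolding B_def by (simp add: algebra_simps flip: exp_add)
  moreover have "summable (\<lambda>n. a * exp (\<bar>b\<bar> * d) * (poisson_weight l n * exp (real n * (\<bar>b\<bar> * R))))"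
    by (intro summable_mult summable_poisson_weight_exp)
  ultimately have summable_B: "summable (\<lambda>n. poisson_weight l n * B n)"
    by (simp add: mult_ac)
  have poisson_nonneg: "poisson_weight l n \<ge> 0" for n
    using \<open>l \<ge> 0\<close> by (simp add: poisson_weight_def)
  show "integrable (mixture (poisson_weight l) (\<lambda>n. distr (\<nu> n) borel (hk f (n + 1)))) (\<lambda>y. y)"
  proof (rule integrable_mixture_id[OF _ _ poisson_nonneg B_nonneg _ summable_B])
    fix n
    have "hk f (n + 1) \<in> borel_measurable (\<nu> n)"
      using f_meas unfolding hk_def measurable_cong_sets[OF sets refl] by measurable
    then show "prob_space (distr (\<nu> n) borel (hk f (n + 1)))"
      by (rule prob_space.prob_space_distr[OF prob])
    show "AE y in distr (\<nu> n) borel (hk f (n + 1)). \<bar>y\<bar> \<le> B n"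
      using f_meas sets f_AE by (rule AE_distr_hk_abs_le) simp
  qed simp
  show "integrable (\<nu> n) f" by (rule f_integrable)
  show "summable (\<lambda>n. exp (- l) * l ^ n / fact (n + 1) * \<bar>integral\<^sup>L (\<nu> n) f\<bar>)"
    using summable_B
  proof (rule summable_comparison_test')
    fix n
    have "exp (- l) * l ^ n / fact (n + 1) * \<bar>integral\<^sup>L (\<nu> n) f\<bar> \<le> poisson_weight l n * B n"
      by (rule mult_mono[OF shifted_poisson_weight_le[OF \<open>l \<ge> 0\<close>] f_integral poisson_nonneg abs_ge_zero])
    then show "norm (exp (- l) * l ^ n / fact (n + 1) * \<bar>integral\<^sup>L (\<nu> n) f\<bar>) \<le> poisson_weight l n * B n"
      using \<open>l \<ge> 0\<close> by simp
  qed
qed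

lemma sigma_x_and_sigma_finite_mean:
  fixes f :: "real \<Rightarrow> real"
  assumes f_meas: "f \<in> borel_measurable borel"
    and f_bound: "\<And>x. \<bar>f x\<bar> \<le> a * cosh (b * x)"
    and "l \<ge> 0" and csp: "compactly_supported_prob \<rho>"
  shows "integrable (sigma_x f l \<rho> x) (\<lambda>y. y)"
    and "integrable (sigma f l \<rho>) (\<lambda>y. y)"
    and "integrable (return borel x \<star> conv_pow \<rho> n) f"
    and "integrable (conv_pow \<rho> (Suc n)) f"
    and "summable (\<lambda>n. exp (- l) * l ^ n / fact (n + 1) *
      \<bar>integral\<^sup>L (return borel x \<star> conv_pow \<rho> n) f\<bar>)"
    and "summable (\<lambda>n. exp (- l) * l ^ n / fact (n + 1) * \<bar>integral\<^sup>L (conv_pow \<rho> (Suc n)) f\<bar>)"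
proof -
  have \<rho>: "prob_space \<rho>" "sets \<rho> = sets borel"
    using csp unfolding compactly_supported_prob_def by auto
  obtain R where R: "AE z in \<rho>. \<bar>z\<bar> \<le> R"
    using compactly_supported_prob_AE_abs_le[OF csp] .
  note mixture = poisson_mixture_finite_mean[OF f_meas f_bound \<open>l \<ge> 0\<close>]
  have shifted_support: "AE z in return borel x \<star> conv_pow \<rho> n. \<bar>z\<bar> \<le> \<bar>x\<bar> + real n * R" for n
  proof (rule AE_convolution_abs_le)
    show "sigma_finite_measure (return borel x)" "sigma_finite_measure (conv_pow \<rho> n)"
      by (intro prob_space_imp_sigma_finite prob_space_return prob_space_conv_pow \<rho>; simp)+
    show "AE z in return borel x. \<bar>z\<bar> \<le> \<bar>x\<bar>" by (simp add: AE_return)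
  qed (simp_all add: AE_conv_pow_abs_le[OF \<rho> R])
  have "prob_space (return borel x \<star> conv_pow \<rho> n)" for n
    by (intro prob_space_convolution prob_space_return prob_space_conv_pow \<rho>; simp)+
  note shifted = mixture[where \<nu>="\<lambda>n. return borel x \<star> conv_pow \<rho> n", OF this sets_convolution shifted_support]
  have "AE z in conv_pow \<rho> (Suc n). \<bar>z\<bar> \<le> R + real n * R" for n
    using AE_conv_pow_abs_le[OF \<rho> R, of "Suc n"] by (simp add: algebra_simps)
  note unshifted = mixture[where \<nu>="\<lambda>n. conv_pow \<rho> (Suc n)", OF prob_space_conv_pow[OF \<rho>] sets_conv_pow this]
  show "integrable (sigma_x f l \<rho> x) (\<lambda>y. y)" "integrable (sigma f l \<rho>) (\<lambda>y. y)"
    unfolding sigma_x_def sigma_def by (fact shifted(1) unshifted(1))+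
  show "integrable (return borel x \<star> conv_pow \<rho> n) f" "integrable (conv_pow \<rho> (Suc n)) f"
    by (fact shifted(2) unshifted(2))+
  show "summable (\<lambda>n. exp (- l) * l ^ n / fact (n + 1) *
      \<bar>integral\<^sup>L (return borel x \<star> conv_pow \<rho> n) f\<bar>)"
    "summable (\<lambda>n. exp (- l) * l ^ n / fact (n + 1) * \<bar>integral\<^sup>L (conv_pow \<rho> (Suc n)) f\<bar>)"
    by (fact shifted(3) unshifted(3))+
qed

theorem theorem4:
  fixes f :: "real \<Rightarrow> real" and a b l :: real
  assumes "continuous_on UNIV f"
    and "a > 0"
    and "\<And>x. \<bar>f x\<bar> \<le> a * cosh (b * x)"
    and "l > 0"
  shows "\<forall>\<rho> x. compactly_supported_prob \<rho> \<longrightarrow>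
     integrable (sigma_x f l \<rho> x) (\<lambda>y. y) \<and>
     integrable (sigma f l \<rho>) (\<lambda>y. y) \<and>
     (\<forall>n. integrable (convolution (return borel x) (conv_pow \<rho> n)) f) \<and>
     (\<forall>n. integrable (conv_pow \<rho> (Suc n)) f) \<and>
     summable (\<lambda>n. exp (- l) * l ^ n / fact (n + 1) *
        \<bar>integral\<^sup>L (convolution (return borel x) (conv_pow \<rho> n)) f\<bar>) \<and>
     summable (\<lambda>n. exp (- l) * l ^ n / fact (n + 1) *
        \<bar>integral\<^sup>L (conv_pow \<rho> (Suc n)) f\<bar>)"
  by (intro allI impI conjI sigma_x_and_sigma_finite_mean[OF borel_measurable_continuous_onI[OF assms(1)]
        assms(3) less_imp_le[OF assms(4)]])

end
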